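(* Let $p$ be a binary word of length $l$ with $r$ runs, let $r_i$ be the number of runs of size $i$, and let $r_{2,b}\in\{0,1,2\}$ be the number of runs of size $2$ that are the first or the last run of $p$. For every $n\ge 3$: if $l\ge 3$ then $$B_{n,p}(3)=r_1\binom{n-r-1}{l-r+1}+(r_2-r_{2,b})\binom{n-r-1}{l-r}+r_{2,b}\binom{n-r}{l-r+1},$$ and if $l<3$ then $B_{n,p}(3)=\binom{n}{3}$ when $r=1$, and $B_{n,p}(3)=3(n-3)$ when $r=2$.
   Context: $c_p(w)$ is the number of occurrences of $p$ as a (not necessarily consecutive) subsequence of the binary word $w$; $B_{n,p}(k)$ is the number of binary words of length $n$ with $c_p(w)=k$. A run is a maximal block of consecutive equal letters; its size is its length. Convention: $\binom{a}{b}=0$ unless $0\le b\le a$. *)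

theory Defs
  imports Main
begin

definition occ :: "bool list \<Rightarrow> bool list \<Rightarrow> nat" where
  "occ p w = card {I. I \<subseteq> {..<length w} \<and> card I = length p \<and> nths w I = p}"

definition Bnp :: "nat \<Rightarrow> bool list \<Rightarrow> nat \<Rightarrow> nat" where
  "Bnp n p k = card {w :: bool list. length w = n \<and> occ p w = k}"

fun runs :: "'a list \<Rightarrow> 'a list list" where
  "runs [] = []"
| "runs (x # xs) = (case runs xs of
      [] \<Rightarrow> [[x]]
    | g # gs \<Rightarrow> (if hd g = x then (x # g) # gs else [x] # g # gs))"

definition run_sizes :: "'a list \<Rightarrow> nat list" where
  "run_sizes p = map length (runs p)"

definition runs_of_size :: "'a list \<Rightarrow> nat \<Rightarrow> nat" where
  "runs_of_size p i = card {j. j < length (run_sizes p) \<and> run_sizes p ! j = i}"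

definition runs2_boundary :: "'a list \<Rightarrow> nat" where
  "runs2_boundary p = card {j. j < length (run_sizes p) \<and> (j = 0 \<or> j = length (run_sizes p) - 1)
                              \<and> run_sizes p ! j = 2}"

definition binom :: "int \<Rightarrow> int \<Rightarrow> nat" where
  "binom a b = (if 0 \<le> b \<and> b \<le> a then nat a choose nat b else 0)"

end

theory Submission
  imports Defs
begin

text \<open>Reading a word from the left, the occurrences of \<open>x # q\<close> in \<open>y # w\<close> are those in \<open>w\<close>
  together with, if \<open>y = x\<close>, those of \<open>q\<close> in \<open>w\<close>. Splitting words on their first letter
  therefore turns the number of words with exactly three occurrences of \<open>p\<close> into a system of
  recursions in the word length, involving a few auxiliary conditions on suffixes \<open>q\<close> of \<open>p\<close>:
  exactly \<open>k\<close> occurrences of \<open>q\<close> and none of \<open>c # q\<close>, where \<open>c\<close> is a letter already read,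
  and prescribed numbers of occurrences of both \<open>q\<close> and \<open>x # q\<close>. Each auxiliary count is a sum
  of stars-and-bars numbers whose parameters are read off from the runs of \<open>q\<close>; these closed
  forms are confirmed by checking that they satisfy the same recursions, which reduces to
  Pascal's rule. Patterns of length at most two are counted directly.\<close>

section \<open>Counting occurrences letter by letter\<close>

fun subseq_count :: "bool list \<Rightarrow> bool list \<Rightarrow> nat" where
  "subseq_count [] w = 1"
| "subseq_count (x # p) [] = 0"
| "subseq_count (x # p) (y # w) = subseq_count (x # p) w + (if x = y then subseq_count p w else 0)"

definition occ_sets :: "bool list \<Rightarrow> bool list \<Rightarrow> nat set set" where
  "occ_sets p w = {I. I \<subseteq> {..<length w} \<and> card I = length p \<and> nths w I = p}"

lemma occ_sets_Nil: "occ_sets [] w = {{}}"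
proof -
  have "I = {}" if "I \<subseteq> {..<length w}" "card I = 0" for I :: "nat set"
    using that finite_subset[OF that(1)] by auto
  then show ?thesis unfolding occ_sets_def by auto
qed

lemma occ_sets_Cons_Nil: "occ_sets (x # p) [] = {}"
  unfolding occ_sets_def by auto

lemma finite_occ_sets: "finite (occ_sets p w)"
  unfolding occ_sets_def by (rule finite_subset[of _ "Pow {..<length w}"]) auto

lemma nths_Cons_Suc_image: "nths (y # w) (Suc ` J) = nths w J"
  by (simp add: nths_Cons image_iff)

lemma nths_Cons_insert_0: "nths (y # w) (insert 0 (Suc ` J)) = y # nths w J"
  by (simp add: nths_Cons image_iff)

lemma occ_sets_Cons_cases:
  assumes "I \<in> occ_sets (x # p) (y # w)"
  obtains J where "J \<in> occ_sets (x # p) w" "I = Suc ` J"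
    | J where "x = y" "J \<in> occ_sets p w" "I = insert 0 (Suc ` J)"
proof -
  define J where "J = {j. Suc j \<in> I}"
  have sub: "I \<subseteq> {..<Suc (length w)}" and card_I: "card I = Suc (length p)"
    and nths_I: "nths (y # w) I = x # p" using assms by (auto simp: occ_sets_def)
  have J_sub: "J \<subseteq> {..<length w}" using sub by (auto simp: J_def)
  then have "finite J" using finite_subset by blast
  show ?thesis
  proof (cases "0 \<in> I")
    case False
    have I_eq: "I = Suc ` J"
      using False by (auto simp: J_def image_iff) (metis not0_implies_Suc)
    then have "J \<in> occ_sets (x # p) w"
      using J_sub card_I nths_I by (simp add: occ_sets_def card_image nths_Cons_Suc_image)
    then show ?thesis using I_eq that(1) by blast
  next
    case True
    have I_eq: "I = insert 0 (Suc ` J)"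
      using True by (auto simp: J_def image_iff) (metis not0_implies_Suc)
    then have "card J = length p" and "y # nths w J = x # p"
      using card_I nths_I \<open>finite J\<close> by (simp_all add: card_image nths_Cons_insert_0)
    then show ?thesis using J_sub I_eq that(2) by (auto simp: occ_sets_def)
  qed
qed

lemma occ_sets_Cons:
  "occ_sets (x # p) (y # w) = (\<lambda>J. Suc ` J) ` occ_sets (x # p) w \<union>
     (if x = y then (\<lambda>J. insert 0 (Suc ` J)) ` occ_sets p w else {})"
proof (intro set_eqI iffI)
  fix I
  assume "I \<in> occ_sets (x # p) (y # w)"
  then show "I \<in> (\<lambda>J. Suc ` J) ` occ_sets (x # p) w \<union>
     (if x = y then (\<lambda>J. insert 0 (Suc ` J)) ` occ_sets p w else {})"
    by (cases rule: occ_sets_Cons_cases) auto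
next
  fix I
  assume "I \<in> (\<lambda>J. Suc ` J) ` occ_sets (x # p) w \<union>
     (if x = y then (\<lambda>J. insert 0 (Suc ` J)) ` occ_sets p w else {})"
  then consider J where "J \<in> occ_sets (x # p) w" "I = Suc ` J"
    | J where "x = y" "J \<in> occ_sets p w" "I = insert 0 (Suc ` J)"
    by (auto split: if_splits)
  then show "I \<in> occ_sets (x # p) (y # w)"
  proof cases
    case 1
    then show ?thesis by (auto simp: occ_sets_def card_image nths_Cons_Suc_image)
  next
    case 2
    moreover have "finite J" using 2 finite_subset by (auto simp: occ_sets_def)
    ultimately show ?thesis by (auto simp: occ_sets_def card_image nths_Cons_insert_0)
  qed
qed

lemma occ_eq_subseq_count: "occ p w = subseq_count p w"
proof -
  have "card (occ_sets p w) = subseq_count p w"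
  proof (induction w arbitrary: p)
    case Nil
    then show ?case by (cases p) (auto simp: occ_sets_Nil occ_sets_Cons_Nil)
  next
    case (Cons y w)
    show ?case
    proof (cases p)
      case Nil
      then show ?thesis by (simp add: occ_sets_Nil)
    next
      case (Cons x p')
      have inj_Suc: "inj_on (\<lambda>J. Suc ` J) X" for X :: "nat set set"
        by (rule inj_onI) (simp add: inj_image_eq_iff)
      have inj_ins: "inj_on (\<lambda>J. insert 0 (Suc ` J)) X" for X :: "nat set set"
      proof (rule inj_onI)
        fix a b :: "nat set"
        assume "insert 0 (Suc ` a) = insert 0 (Suc ` b)"
        then have "Suc ` a = Suc ` b" by (metis Diff_insert_absorb image_iff nat.distinct(1))
        then show "a = b" by (simp add: inj_image_eq_iff)
      qed
      have "(\<lambda>J. Suc ` J) ` occ_sets (x # p') w \<inter> (\<lambda>J. insert 0 (Suc ` J)) ` occ_sets p' w = {}"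
        by auto
      then show ?thesis using Cons.IH
        by (auto simp: Cons occ_sets_Cons card_Un_disjoint finite_occ_sets
            card_image[OF inj_Suc] card_image[OF inj_ins])
    qed
  qed
  then show ?thesis by (simp add: occ_def occ_sets_def)
qed

lemma subseq_count_le_Cons: "subseq_count q w \<le> subseq_count q (y # w)"
  by (cases q) auto

lemma subseq_count_Cons_skip: "q = [] \<or> hd q \<noteq> y \<Longrightarrow> subseq_count q (y # w) = subseq_count q w"
  by (cases q) auto

lemma subseq_count_tl_pos: "subseq_count (x # q) w > 0 \<Longrightarrow> subseq_count q w > 0"
proof (induction w)
  case (Cons y w)
  then show ?case using subseq_count_le_Cons[of q w y] by (auto split: if_splits)
qed simp

lemma subseq_count_append_pos: "subseq_count (q @ q') w > 0 \<Longrightarrow> subseq_count q' w > 0"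
  by (induction q) (auto dest: subseq_count_tl_pos)

text \<open>An occurrence of \<open>x # q @ x # q'\<close> yields two occurrences of \<open>x # q'\<close>:
  one starting at either of the two letters \<open>x\<close>.\<close>
lemma subseq_count_repeat_ge_2:
  "subseq_count (x # q @ x # q') w > 0 \<Longrightarrow> subseq_count (x # q') w \<ge> 2"
proof (induction w)
  case (Cons y w)
  show ?case
  proof (cases "subseq_count (x # q @ x # q') w > 0")
    case True
    then show ?thesis using Cons.IH by simp
  next
    case False
    then have "x = y" and second: "subseq_count (q @ x # q') w > 0"
      using Cons.prems by (auto split: if_splits)
    moreover have "subseq_count (x # q') w > 0" using second by (rule subseq_count_append_pos)
    moreover from this have "subseq_count q' w > 0" by (rule subseq_count_tl_pos)
    ultimately show ?thesis by simp
  qed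
qed simp

lemma subseq_count_Cons_eq_0_or_tl_pos: "subseq_count (x # q) w = 0 \<or> subseq_count q w > 0"
  by (cases "subseq_count (x # q) w = 0") (auto dest: subseq_count_tl_pos)

lemma subseq_count_dup_eq_0_or_ge_2: "subseq_count (x # x # q) w = 0 \<or> subseq_count (x # q) w \<ge> 2"
  using subseq_count_repeat_ge_2[of x "[]" q w] by auto

section \<open>Words of a given length\<close>

definition count_words :: "nat \<Rightarrow> (bool list \<Rightarrow> bool) \<Rightarrow> nat" where
  "count_words n P = card {w. length w = n \<and> P w}"

lemma finite_words_length: "finite {w :: bool list. length w = n \<and> P w}"
  by (rule finite_subset[OF _ finite_lists_length_eq[of "UNIV :: bool set" n]]) auto

lemma count_words_0: "count_words 0 P = of_bool (P [])"
proof -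
  have "{w :: bool list. length w = 0 \<and> P w} = (if P [] then {[]} else {})" by auto
  then show ?thesis by (simp add: count_words_def)
qed

lemma count_words_Suc:
  "count_words (Suc n) P = count_words n (\<lambda>w. P (x # w)) + count_words n (\<lambda>w. P ((\<not> x) # w))"
proof -
  have split: "{w. length w = Suc n \<and> P w} =
      Cons x ` {w. length w = n \<and> P (x # w)} \<union> Cons (\<not> x) ` {w. length w = n \<and> P ((\<not> x) # w)}"
  proof (rule set_eqI)
    fix w
    show "w \<in> {w. length w = Suc n \<and> P w} \<longleftrightarrow>
      w \<in> Cons x ` {w. length w = n \<and> P (x # w)} \<union> Cons (\<not> x) ` {w. length w = n \<and> P ((\<not> x) # w)}"
    proof (cases w)
      case (Cons a v)
      then show ?thesis by (cases "a = x") (auto simp: image_iff)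
    qed auto
  qed
  show ?thesis unfolding count_words_def split
    by (subst card_Un_disjoint) (auto simp: finite_words_length card_image)
qed

lemma count_words_disj:
  "(\<And>w. \<not> (P w \<and> Q w)) \<Longrightarrow> count_words n (\<lambda>w. P w \<or> Q w) = count_words n P + count_words n Q"
proof -
  assume disj: "\<And>w. \<not> (P w \<and> Q w)"
  have split: "{w. length w = n \<and> (P w \<or> Q w)} =
      {w. length w = n \<and> P w} \<union> {w. length w = n \<and> Q w}"
    by auto
  show ?thesis unfolding count_words_def split
    by (subst card_Un_disjoint) (use disj in \<open>auto simp: finite_words_length\<close>)
qed

lemma count_words_False: "count_words n (\<lambda>w. False) = 0"
  by (simp add: count_words_def)

section \<open>Stars and bars\<close>

text \<open>The number of ways to write \<open>N\<close> as an ordered sum of \<open>g\<close> natural numbers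
  (stars and bars); it vanishes for negative \<open>N\<close>.\<close>
definition weak_comps :: "int \<Rightarrow> nat \<Rightarrow> nat" where
  "weak_comps N g =
    (if N < 0 then 0 else if g = 0 then of_bool (N = 0) else (nat N + g - 1) choose (g - 1))"

lemma weak_comps_Suc: "weak_comps N (Suc g) = weak_comps N g + weak_comps (N - 1) (Suc g)"
proof (cases "N > 0 \<and> g > 0")
  case True
  then obtain k where "g = Suc k" by (cases g) auto
  moreover have "nat N = Suc (nat (N - 1))" using True by arith
  ultimately show ?thesis using True by (simp add: weak_comps_def)
qed (auto simp: weak_comps_def)

lemma weak_comps_eq_binom: "g \<ge> 1 \<Longrightarrow> weak_comps N g = binom (N + int g - 1) (int g - 1)"
  by (auto simp: weak_comps_def binom_def nat_diff_distrib' nat_add_distrib)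

section \<open>Runs\<close>

lemma runs_Cons_hd: "xs \<noteq> [] \<Longrightarrow> \<exists>g gs. runs xs = g # gs \<and> hd g = hd xs"
proof (induction xs)
  case (Cons x xs)
  then show ?case by (cases xs) auto
qed simp

lemma run_sizes_Nil [simp]: "run_sizes [] = []"
  by (simp add: run_sizes_def)

lemma run_sizes_single [simp]: "run_sizes [x] = [1]"
  by (simp add: run_sizes_def)

lemma run_sizes_Cons_same:
  "q \<noteq> [] \<Longrightarrow> hd q = x \<Longrightarrow> run_sizes (x # q) = Suc (hd (run_sizes q)) # tl (run_sizes q)"
  using runs_Cons_hd[of q] by (auto simp: run_sizes_def)

lemma run_sizes_Cons_diff: "q \<noteq> [] \<Longrightarrow> hd q \<noteq> x \<Longrightarrow> run_sizes (x # q) = 1 # run_sizes q"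
  using runs_Cons_hd[of q] by (auto simp: run_sizes_def)

lemma run_sizes_eq_Nil_iff [simp]: "run_sizes q = [] \<longleftrightarrow> q = []"
  using runs_Cons_hd[of q] by (cases "q = []") (auto simp: run_sizes_def)

lemma length_run_sizes_le: "length (run_sizes q) \<le> length q"
proof (induction q)
  case (Cons x q)
  then show ?case
    by (cases "q = []"; cases "hd q = x") (simp_all add: run_sizes_Cons_same run_sizes_Cons_diff)
qed simp

lemma bool_list_cases [case_names Nil other single alt dup]:
  fixes x :: bool
  obtains "q = []" | q' where "q = (\<not> x) # q'" | "q = [x]"
    | q' where "q = x # (\<not> x) # q'" | q' where "q = x # x # q'"
  using that by (cases q rule: remdups_adj.cases) auto

definition starts_with :: "bool \<Rightarrow> bool list \<Rightarrow> bool" where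
  "starts_with c q \<longleftrightarrow> q \<noteq> [] \<and> hd q = c"

definition lead_run :: "bool \<Rightarrow> bool list \<Rightarrow> nat" where
  "lead_run c q = (if starts_with c q then hd (run_sizes q) else 0)"

definition guarded_runs :: "bool \<Rightarrow> bool list \<Rightarrow> nat list" where
  "guarded_runs c q = (if starts_with c q then tl (run_sizes q) else run_sizes q)"

text \<open>A word with a unique occurrence of \<open>q\<close> and no occurrence of \<open>c # q\<close> is \<open>q\<close> with its
  remaining letters inserted into \<open>slots c q\<close> gaps, each gap admitting only one letter.\<close>
definition slots :: "bool \<Rightarrow> bool list \<Rightarrow> nat" where
  "slots c q = length q - length (run_sizes q) + 1 + of_bool (starts_with c q)"

lemma run_sizes_Cons: "run_sizes (x # q) = Suc (lead_run x q) # guarded_runs x q"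
  by (cases "q = []"; cases "hd q = x")
     (simp_all add: lead_run_def guarded_runs_def starts_with_def run_sizes_Cons_same
       run_sizes_Cons_diff)

lemma guarded_runs_Cons_same: "guarded_runs x (x # q) = guarded_runs x q"
  using run_sizes_Cons[of x q] by (simp add: guarded_runs_def starts_with_def)

lemma guarded_runs_Cons_diff: "c \<noteq> x \<Longrightarrow> guarded_runs c (x # q) = run_sizes (x # q)"
  by (simp add: guarded_runs_def starts_with_def)

lemma slots_pos: "slots c q \<ge> 1"
  by (simp add: slots_def)

lemma slots_Cons: "slots c (x # q) = slots x q + of_bool (c = x)"
proof (cases "q = []")
  case False
  then show ?thesis using length_run_sizes_le[of q]
    by (cases "hd q = x")
       (auto simp: slots_def starts_with_def run_sizes_Cons_same run_sizes_Cons_diff Suc_diff_le)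
qed (simp add: slots_def starts_with_def)

lemma lead_run_Nil [simp]: "lead_run x [] = 0"
  by (simp add: lead_run_def starts_with_def)

lemma lead_run_Cons_other [simp]: "lead_run x ((\<not> x) # q) = 0"
  by (simp add: lead_run_def starts_with_def)

lemma lead_run_Cons_same [simp]: "lead_run x (x # q) = Suc (lead_run x q)"
  using run_sizes_Cons[of x q] by (simp add: lead_run_def starts_with_def)

lemma guarded_runs_Nil [simp]: "guarded_runs c [] = []"
  by (simp add: guarded_runs_def)

lemma slots_Nil [simp]: "slots c [] = 1"
  by (simp add: slots_def starts_with_def)

section \<open>Words with one or three occurrences\<close>

text \<open>The last argument \<open>E\<close> of the following closed forms is the number of letters of the
  word beyond those of the pattern.\<close>

definition three_guarded_num :: "bool \<Rightarrow> bool list \<Rightarrow> int \<Rightarrow> nat" where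
  "three_guarded_num c q E =
     count_list (guarded_runs c q) 1 * weak_comps (E - 2) (slots c q)
   + count_list (butlast (guarded_runs c q)) 2 * weak_comps (E - 1) (slots c q - 1)
   + of_bool (guarded_runs c q \<noteq> [] \<and> last (guarded_runs c q) = 2) * weak_comps (E - 1) (slots c q)"

definition lead_three_guarded_num :: "bool \<Rightarrow> bool list \<Rightarrow> int \<Rightarrow> nat" where
  "lead_three_guarded_num x q E =
     of_bool (lead_run x q = 0) * weak_comps (E - 2) (slots x q)
   + of_bool (lead_run x q = 1 \<and> guarded_runs x q \<noteq> []) * weak_comps (E - 1) (slots x q - 1)
   + of_bool (lead_run x q = 1 \<and> guarded_runs x q = []) * weak_comps (E - 1) (slots x q)"

definition lead_three_num :: "bool \<Rightarrow> bool list \<Rightarrow> int \<Rightarrow> nat" where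
  "lead_three_num x q E =
     of_bool (lead_run x q = 0) * weak_comps (E - 2) (slots x q)
   + of_bool (lead_run x q = 1) * weak_comps (E - 1) (slots x q)"

definition three_num :: "bool list \<Rightarrow> int \<Rightarrow> nat" where
  "three_num p E =
     (let rs = run_sizes p; g = length p - length rs + 2 in
        count_list rs 1 * weak_comps (E - 2) g
      + count_list (butlast (tl rs)) 2 * weak_comps (E - 1) (g - 1)
      + (of_bool (rs \<noteq> [] \<and> hd rs = 2) + of_bool (length rs \<ge> 2 \<and> last rs = 2))
          * weak_comps (E - 1) g)"

lemma three_guarded_num_Cons_same:
  "three_guarded_num x (x # q) E = three_guarded_num x q E + three_guarded_num x (x # q) (E - 1)"
proof -
  obtain s where s: "slots x q = Suc s" using slots_pos[of x q] by (cases "slots x q") auto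
  have "weak_comps (E - 2) (Suc (Suc s)) = weak_comps (E - 2) (Suc s) + weak_comps (E - 3) (Suc (Suc s))"
    using weak_comps_Suc[of "E - 2" "Suc s"] by simp
  moreover have "weak_comps (E - 1) (Suc s) = weak_comps (E - 1) s + weak_comps (E - 2) (Suc s)"
    using weak_comps_Suc[of "E - 1" s] by simp
  moreover have "weak_comps (E - 1) (Suc (Suc s)) = weak_comps (E - 1) (Suc s) + weak_comps (E - 2) (Suc (Suc s))"
    using weak_comps_Suc[of "E - 1" "Suc s"] by simp
  ultimately show ?thesis
    by (simp add: three_guarded_num_def guarded_runs_Cons_same slots_Cons s algebra_simps)
qed

lemma three_guarded_num_Cons_diff:
  assumes "c \<noteq> x"
  shows "three_guarded_num c (x # q) E = three_guarded_num x q E + lead_three_guarded_num x q E"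
proof -
  obtain s where s: "slots x q = Suc s" using slots_pos[of x q] by (cases "slots x q") auto
  consider "lead_run x q = 0" | "lead_run x q = 1" | "lead_run x q \<ge> 2" by linarith
  then show ?thesis using assms
    by cases
       (cases "guarded_runs x q = []";
        simp add: three_guarded_num_def lead_three_guarded_num_def guarded_runs_Cons_diff
          run_sizes_Cons slots_Cons s algebra_simps)+
qed

lemma three_num_Cons:
  "three_num (x # q) E = three_num (x # q) (E - 1) + three_guarded_num x q E + lead_three_num x q E"
proof -
  obtain s where s: "slots x q = Suc s" using slots_pos[of x q] by (cases "slots x q") auto
  define a where "a = lead_run x q"
  define G where "G = guarded_runs x q"
  have g: "length (x # q) - length (run_sizes (x # q)) + 2 = Suc (Suc s)"
    using slots_Cons[of x x q] s by (simp add: slots_def starts_with_def)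
  have unfold: "three_num (x # q) N =
      (of_bool (a = 0) + count_list G 1) * weak_comps (N - 2) (Suc (Suc s))
    + count_list (butlast G) 2 * weak_comps (N - 1) (Suc s)
    + (of_bool (a = 1) + of_bool (G \<noteq> [] \<and> last G = 2)) * weak_comps (N - 1) (Suc (Suc s))"
    for N
    unfolding three_num_def Let_def g by (auto simp: run_sizes_Cons a_def G_def Suc_le_eq)
  have p1: "weak_comps (E - 2) (Suc (Suc s)) = weak_comps (E - 2) (Suc s) + weak_comps (E - 3) (Suc (Suc s))"
    using weak_comps_Suc[of "E - 2" "Suc s"] by simp
  have p2: "weak_comps (E - 1) (Suc s) = weak_comps (E - 1) s + weak_comps (E - 2) (Suc s)"
    using weak_comps_Suc[of "E - 1" s] by simp
  have p3: "weak_comps (E - 1) (Suc (Suc s)) = weak_comps (E - 1) (Suc s) + weak_comps (E - 2) (Suc (Suc s))"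
    using weak_comps_Suc[of "E - 1" "Suc s"] by simp
  show ?thesis
    unfolding unfold three_guarded_num_def lead_three_num_def a_def[symmetric] G_def[symmetric] s
    by (simp add: p1 p2 p3 algebra_simps)
qed

definition exact_guarded :: "nat \<Rightarrow> bool \<Rightarrow> bool list \<Rightarrow> bool list \<Rightarrow> bool" where
  "exact_guarded k c q w \<longleftrightarrow> subseq_count q w = k \<and> subseq_count (c # q) w = 0"

definition lead_one :: "bool \<Rightarrow> bool list \<Rightarrow> bool list \<Rightarrow> bool" where
  "lead_one x q w \<longleftrightarrow> subseq_count (x # q) w = 1 \<and> subseq_count q w = 1"

text \<open>Equivalently, \<open>x # w\<close> has exactly three occurrences of \<open>x # q\<close>, not all of which use
  its first letter.\<close>
definition lead_three :: "bool \<Rightarrow> bool list \<Rightarrow> bool list \<Rightarrow> bool" where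
  "lead_three x q w \<longleftrightarrow> subseq_count (x # q) w \<ge> 1 \<and> subseq_count (x # q) w + subseq_count q w = 3"

definition lead_one_guarded :: "bool \<Rightarrow> bool \<Rightarrow> bool list \<Rightarrow> bool list \<Rightarrow> bool" where
  "lead_one_guarded c x q w \<longleftrightarrow> lead_one x q w \<and> subseq_count (c # x # q) w = 0"

definition lead_three_guarded :: "bool \<Rightarrow> bool list \<Rightarrow> bool list \<Rightarrow> bool" where
  "lead_three_guarded x q w \<longleftrightarrow> lead_three x q w \<and> subseq_count ((\<not> x) # x # q) w = 0"

lemma exact_guarded_Nil: "k \<ge> 1 \<Longrightarrow> exact_guarded k c q [] \<longleftrightarrow> k = 1 \<and> q = []"
  by (cases q) (auto simp: exact_guarded_def)

lemma exact_guarded_1_Nil_Cons: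
  "exact_guarded 1 c [] (y # w) \<longleftrightarrow> y \<noteq> c \<and> exact_guarded 1 c [] w"
  by (auto simp: exact_guarded_def)

lemma exact_guarded_Cons_Cons_same:
  "exact_guarded k x (x # q) (x # w) \<longleftrightarrow> exact_guarded k x q w"
  using subseq_count_Cons_eq_0_or_tl_pos[of x "x # q" w]
  by (auto simp: exact_guarded_def; presburger)

lemma exact_guarded_Cons_Cons_skip:
  "exact_guarded k x (x # q) ((\<not> x) # w) \<longleftrightarrow> exact_guarded k x (x # q) w"
  by (simp add: exact_guarded_def)

lemma exact_guarded_Cons_Cons_guard:
  "k \<ge> 1 \<Longrightarrow> \<not> exact_guarded k (\<not> x) (x # q) ((\<not> x) # w)"
  by (auto simp: exact_guarded_def)

lemma exact_guarded_1_Cons_Cons: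
  "exact_guarded 1 (\<not> x) (x # q) (x # w) \<longleftrightarrow> exact_guarded 1 x q w"
  using subseq_count_Cons_eq_0_or_tl_pos[of "\<not> x" "x # q" w] subseq_count_Cons_eq_0_or_tl_pos[of x q w]
  by (auto simp: exact_guarded_def; presburger)

lemma exact_guarded_3_Cons_Cons:
  "exact_guarded 3 (\<not> x) (x # q) (x # w) \<longleftrightarrow>
     exact_guarded 3 x q w \<or> lead_three_guarded x q w"
  using subseq_count_Cons_eq_0_or_tl_pos[of "\<not> x" "x # q" w] subseq_count_Cons_eq_0_or_tl_pos[of x q w]
  by (auto simp: exact_guarded_def lead_three_guarded_def lead_three_def; presburger)

lemma lead_one_guarded_same: "lead_one_guarded x x q w \<longleftrightarrow> lead_one x q w"
  using subseq_count_dup_eq_0_or_ge_2[of x q w] by (auto simp: lead_one_guarded_def lead_one_def)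

lemma lead_one_guarded_Cons:
  assumes "q = [] \<or> hd q \<noteq> x"
  shows "lead_one_guarded c x q (x # w) \<longleftrightarrow> exact_guarded 1 x q w"
  using subseq_count_Cons_eq_0_or_tl_pos[of x q w] subseq_count_Cons_eq_0_or_tl_pos[of c "x # q" w]
  by (auto simp: lead_one_guarded_def lead_one_def exact_guarded_def subseq_count_Cons_skip[OF assms];
      presburger)

lemma lead_one_guarded_Cons_other:
  assumes "q = [] \<or> hd q \<noteq> x" and "q = [] \<longrightarrow> c \<noteq> x"
  shows "\<not> lead_one_guarded c x q ((\<not> x) # w)"
proof (cases "c = x")
  case True
  with assms obtain q' where "q = (\<not> x) # q'" by (cases q) auto
  then show ?thesis
    using subseq_count_Cons_eq_0_or_tl_pos[of x q w] subseq_count_Cons_eq_0_or_tl_pos[of "\<not> x" q' w]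
    by (auto simp: lead_one_guarded_def lead_one_def; presburger)
qed (auto simp: lead_one_guarded_def lead_one_def)

lemma lead_three_Cons_other:
  "lead_three x ((\<not> x) # q) (x # w) \<longleftrightarrow> lead_one x ((\<not> x) # q) w"
  using subseq_count_Cons_eq_0_or_tl_pos[of x "(\<not> x) # q" w]
  by (auto simp: lead_three_def lead_one_def; presburger)

lemma lead_three_Cons_other_skip:
  assumes "q \<noteq> []"
  shows "\<not> lead_three x ((\<not> x) # q) ((\<not> x) # w)"
proof -
  obtain y q' where q: "q = y # q'" using assms by (cases q) auto
  have "subseq_count q w \<ge> 2 \<or> subseq_count (x # (\<not> x) # q) w = 0 \<or> subseq_count ((\<not> x) # q) w = 0"
  proof (cases "y = x")
    case True
    then show ?thesis using subseq_count_repeat_ge_2[of x "[\<not> x]" q' w] q by auto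
  next
    case False
    then show ?thesis using subseq_count_dup_eq_0_or_ge_2[of "\<not> x" q' w] q by auto
  qed
  then show ?thesis
    using subseq_count_Cons_eq_0_or_tl_pos[of x "(\<not> x) # q" w]
      subseq_count_Cons_eq_0_or_tl_pos[of "\<not> x" q w]
    by (auto simp: lead_three_def; presburger)
qed

lemma lead_three_Cons_same:
  assumes "q \<noteq> []" "hd q \<noteq> x"
  shows "lead_three x (x # q) (x # w) \<longleftrightarrow> lead_one x q w"
  using subseq_count_Cons_eq_0_or_tl_pos[of x q w] subseq_count_dup_eq_0_or_ge_2[of x q w]
  by (auto simp: lead_three_def lead_one_def subseq_count_Cons_skip assms; presburger)

lemma lead_three_Cons_same_skip:
  "lead_three x (x # q) ((\<not> x) # w) \<longleftrightarrow> lead_three x (x # q) w"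
  by (simp add: lead_three_def)

lemma lead_three_dup: "\<not> lead_three x (x # x # q) (x # w)"
  using subseq_count_dup_eq_0_or_ge_2[of x "x # q" w] subseq_count_dup_eq_0_or_ge_2[of x q w]
  by (auto simp: lead_three_def; presburger)

lemma lead_three_guarded_skip: "\<not> lead_three_guarded x q ((\<not> x) # w)"
  by (auto simp: lead_three_guarded_def lead_three_def)

lemma lead_three_guarded_Cons:
  assumes "q = [] \<or> hd q \<noteq> x"
  shows "lead_three_guarded x q (x # w) \<longleftrightarrow> lead_one_guarded (\<not> x) x q w"
  using subseq_count_Cons_eq_0_or_tl_pos[of x q w]
  by (auto simp: lead_three_guarded_def lead_one_guarded_def lead_three_def lead_one_def
      subseq_count_Cons_skip[OF assms]; presburger)

lemma lead_three_guarded_single: "lead_three_guarded x [x] (x # w) \<longleftrightarrow> exact_guarded 1 x [x] w"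
  using subseq_count_Cons_eq_0_or_tl_pos[of x "[x]" w]
    subseq_count_Cons_eq_0_or_tl_pos[of "\<not> x" "[x, x]" w]
  by (auto simp: lead_three_guarded_def lead_three_def exact_guarded_def; presburger)

lemma lead_three_guarded_Cons_same:
  assumes "q \<noteq> []" "hd q \<noteq> x"
  shows "lead_three_guarded x (x # q) (x # w) \<longleftrightarrow> lead_one x q w"
  using lead_three_Cons_same[OF assms, of w] lead_one_guarded_same[of x q w]
    subseq_count_Cons_eq_0_or_tl_pos[of "\<not> x" "x # x # q" w]
  by (auto simp: lead_three_guarded_def lead_one_guarded_def)

lemma lead_three_guarded_dup: "\<not> lead_three_guarded x (x # x # q) (x # w)"
  using lead_three_dup by (simp add: lead_three_guarded_def)

text \<open>Below, \<open>1 :: nat\<close> must not be rewritten to \<open>Suc 0\<close>, or the lemmas about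
  \<open>exact_guarded 1\<close> and \<open>shifted_inversions x 1\<close> would no longer apply as rewrite rules.\<close>
context
  notes One_nat_def [simp del]
begin

lemma weak_comps_1 [simp]: "weak_comps N 1 = of_bool (N \<ge> 0)"
  by (simp add: weak_comps_def)

lemma count_words_exact_guarded_1:
  "count_words n (exact_guarded 1 c q) = weak_comps (int n - int (length q)) (slots c q)"
proof (induction n arbitrary: c q)
  case 0
  then show ?case
    by (cases q) (simp_all add: count_words_0 exact_guarded_Nil weak_comps_def)
next
  case (Suc m)
  show ?case
  proof (cases q)
    case Nil
    have "count_words (Suc m) (exact_guarded 1 c []) = count_words m (exact_guarded 1 c [])"
      unfolding count_words_Suc[of m _ c] exact_guarded_1_Nil_Cons by (simp add: count_words_False)
    then show ?thesis using Suc.IH[of c "[]"] by (simp add: Nil)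
  next
    case (Cons x q')
    define A where "A = int m - int (length q')"
    have "count_words (Suc m) (exact_guarded 1 c (x # q')) =
        count_words m (exact_guarded 1 x q') + of_bool (c = x) * count_words m (exact_guarded 1 c (x # q'))"
    proof (cases "c = x")
      case True
      then show ?thesis unfolding count_words_Suc[of m _ x]
        by (simp add: exact_guarded_Cons_Cons_same exact_guarded_Cons_Cons_skip)
    next
      case False
      then have "c = (\<not> x)" by simp
      then show ?thesis unfolding count_words_Suc[of m _ x]
        by (simp add: exact_guarded_1_Cons_Cons exact_guarded_Cons_Cons_guard count_words_False)
    qed
    also have "\<dots> = weak_comps A (slots x q') + of_bool (c = x) * weak_comps (A - 1) (slots c (x # q'))"
      using Suc.IH by (simp add: A_def algebra_simps)
    also have "\<dots> = weak_comps A (slots c (x # q'))"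
      using weak_comps_Suc[of A "slots x q'"] by (simp add: slots_Cons Suc_eq_plus1)
    finally show ?thesis by (simp add: Cons A_def)
  qed
qed

lemma count_words_lead_one_guarded:
  assumes "q = [] \<or> hd q \<noteq> x" and "q = [] \<longrightarrow> c \<noteq> x"
  shows "count_words n (lead_one_guarded c x q) = weak_comps (int n - 1 - int (length q)) (slots x q)"
proof (cases n)
  case 0
  then show ?thesis by (simp add: count_words_0 lead_one_guarded_def lead_one_def weak_comps_def)
next
  case (Suc m)
  then show ?thesis
    unfolding Suc count_words_Suc[of m _ x] lead_one_guarded_Cons[OF assms(1)]
    using lead_one_guarded_Cons_other[OF assms]
    by (simp add: count_words_False count_words_exact_guarded_1)
qed

lemma count_words_lead_one:
  assumes "q \<noteq> []" "hd q \<noteq> x"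
  shows "count_words n (lead_one x q) = weak_comps (int n - 1 - int (length q)) (slots x q)"
proof -
  have "lead_one x q = lead_one_guarded x x q" by (simp add: lead_one_guarded_same fun_eq_iff)
  then show ?thesis using count_words_lead_one_guarded[of q x x n] assms by simp
qed

lemma count_words_lead_three_guarded:
  "count_words n (lead_three_guarded x q) = lead_three_guarded_num x q (int n - int (length q))"
proof (cases n)
  case 0
  then show ?thesis
    by (simp add: count_words_0 lead_three_guarded_def lead_three_def lead_three_guarded_num_def
        weak_comps_def)
next
  case (Suc m)
  have "count_words n (lead_three_guarded x q) = count_words m (\<lambda>w. lead_three_guarded x q (x # w))"
    unfolding Suc count_words_Suc[of m _ x] by (simp add: lead_three_guarded_skip count_words_False)
  also have "\<dots> = lead_three_guarded_num x q (int n - int (length q))"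
  proof (cases rule: bool_list_cases[where q = q and x = x])
    case Nil
    then show ?thesis using count_words_lead_one_guarded[of q x "\<not> x" m]
      by (simp add: Suc lead_three_guarded_Cons lead_three_guarded_num_def algebra_simps)
  next
    case (other q')
    then show ?thesis using count_words_lead_one_guarded[of q x "\<not> x" m]
      by (simp add: Suc lead_three_guarded_Cons lead_three_guarded_num_def algebra_simps)
  next
    case single
    then show ?thesis
      by (simp add: Suc lead_three_guarded_single count_words_exact_guarded_1
          lead_three_guarded_num_def guarded_runs_Cons_same algebra_simps)
  next
    case (alt q')
    then show ?thesis using count_words_lead_one[of "(\<not> x) # q'" x m]
      by (simp add: Suc lead_three_guarded_Cons_same lead_three_guarded_num_def
          guarded_runs_Cons_same guarded_runs_Cons_diff slots_Cons algebra_simps)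
  next
    case (dup q')
    then show ?thesis
      by (simp add: lead_three_guarded_dup count_words_False lead_three_guarded_num_def)
  qed
  finally show ?thesis .
qed

lemma count_words_exact_guarded_3:
  "count_words n (exact_guarded 3 c q) = three_guarded_num c q (int n - int (length q))"
proof (induction n arbitrary: c q)
  case 0
  then show ?case
    by (simp add: count_words_0 exact_guarded_Nil three_guarded_num_def weak_comps_def)
next
  case (Suc m)
  show ?case
  proof (cases q)
    case Nil
    then show ?thesis by (simp add: exact_guarded_def count_words_False three_guarded_num_def)
  next
    case (Cons x q')
    show ?thesis
    proof (cases "c = x")
      case True
      then show ?thesis unfolding Cons count_words_Suc[of m _ x]
        using Suc.IH three_guarded_num_Cons_same[of x q' "int m - int (length q')"]
        by (simp add: exact_guarded_Cons_Cons_same exact_guarded_Cons_Cons_skip algebra_simps)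
    next
      case False
      then have c: "c = (\<not> x)" by simp
      have "count_words m (\<lambda>w. exact_guarded 3 x q' w \<or> lead_three_guarded x q' w) =
          count_words m (exact_guarded 3 x q') + count_words m (lead_three_guarded x q')"
        by (rule count_words_disj)
          (auto simp: exact_guarded_def lead_three_guarded_def lead_three_def)
      then show ?thesis unfolding Cons c count_words_Suc[of m _ x]
        using Suc.IH three_guarded_num_Cons_diff[of "\<not> x" x q' "int m - int (length q')"]
        by (simp add: exact_guarded_3_Cons_Cons exact_guarded_Cons_Cons_guard count_words_False
            count_words_lead_three_guarded)
    qed
  qed
qed

lemma count_words_lead_three_alt:
  "count_words n (lead_three x (x # (\<not> x) # q)) =
     weak_comps (int n - int (length q) - 3) (slots x (x # (\<not> x) # q))"
proof (induction n)
  case 0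
  then show ?case by (simp add: count_words_0 lead_three_def weak_comps_def)
next
  case (Suc m)
  then show ?case unfolding count_words_Suc[of m _ x]
    using count_words_lead_one[of "(\<not> x) # q" x m]
      weak_comps_Suc[of "int m - int (length q) - 2" "slots x ((\<not> x) # q)"]
    by (simp add: lead_three_Cons_same lead_three_Cons_same_skip slots_Cons Suc_eq_plus1
        algebra_simps)
qed

lemma count_words_lead_three_dup: "count_words n (lead_three x (x # x # q)) = 0"
proof (induction n)
  case (Suc m)
  then show ?case unfolding count_words_Suc[of m _ x]
    by (simp add: lead_three_dup lead_three_Cons_same_skip count_words_False)
qed (simp add: count_words_0 lead_three_def)

lemma count_words_lead_three:
  assumes "length q \<ge> 2"
  shows "count_words n (lead_three x q) = lead_three_num x q (int n - int (length q))"
proof (cases rule: bool_list_cases[where q = q and x = x])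
  case (other q')
  show ?thesis
  proof (cases n)
    case 0
    then show ?thesis by (simp add: count_words_0 lead_three_def lead_three_num_def weak_comps_def)
  next
    case (Suc m)
    have "q' \<noteq> []" using assms other by auto
    then show ?thesis unfolding Suc count_words_Suc[of m _ x]
      using count_words_lead_one[of q x m]
      by (simp add: other lead_three_Cons_other lead_three_Cons_other_skip count_words_False
          lead_three_num_def algebra_simps)
  qed
next
  case (alt q')
  then show ?thesis by (simp add: count_words_lead_three_alt lead_three_num_def algebra_simps)
next
  case (dup q')
  then show ?thesis by (simp add: count_words_lead_three_dup lead_three_num_def)
qed (use assms in auto)

lemma subseq_count_Cons_Cons_eq_3:
  "subseq_count (x # q) (x # w) = 3 \<longleftrightarrow> exact_guarded 3 x q w \<or> lead_three x q w"
  by (auto simp: exact_guarded_def lead_three_def)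

lemma count_words_subseq_count_eq_3:
  assumes "length q \<ge> 2"
  shows "count_words n (\<lambda>w. subseq_count (x # q) w = 3) = three_num (x # q) (int n - int (length (x # q)))"
proof (induction n)
  case 0
  then show ?case by (simp add: count_words_0 three_num_def Let_def weak_comps_def)
next
  case (Suc m)
  have "count_words m (\<lambda>w. exact_guarded 3 x q w \<or> lead_three x q w) =
      count_words m (exact_guarded 3 x q) + count_words m (lead_three x q)"
    by (rule count_words_disj) (auto simp: exact_guarded_def lead_three_def)
  then show ?case unfolding count_words_Suc[of m _ x] subseq_count_Cons_Cons_eq_3
    using Suc.IH three_num_Cons[of x q "int m - int (length q)"]
    by (simp add: count_words_exact_guarded_3 count_words_lead_three[OF assms] algebra_simps)
qed

section \<open>Patterns of length at most two\<close>

text \<open>The number of occurrences of \<open>[x, \<not> x]\<close> in \<open>replicate m x @ w\<close>.\<close>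
definition shifted_inversions :: "bool \<Rightarrow> nat \<Rightarrow> bool list \<Rightarrow> nat" where
  "shifted_inversions x m w = subseq_count [x, \<not> x] w + m * subseq_count [\<not> x] w"

lemma shifted_inversions_Nil [simp]: "shifted_inversions x m [] = 0"
  by (simp add: shifted_inversions_def)

lemma count_words_shifted_inversions_Suc:
  "count_words (Suc n) (\<lambda>w. shifted_inversions x m w = k) =
     count_words n (\<lambda>w. shifted_inversions x (Suc m) w = k)
   + (if m \<le> k then count_words n (\<lambda>w. shifted_inversions x m w = k - m) else 0)"
  unfolding count_words_Suc[of n _ x]
  by (auto simp: shifted_inversions_def algebra_simps count_words_False
      intro!: arg_cong2[where f = "(+)"] arg_cong[where f = "count_words n"])

lemma count_words_shifted_inversions_too_small:
  "1 \<le> k \<Longrightarrow> k < m \<Longrightarrow> count_words n (\<lambda>w. shifted_inversions x m w = k) = 0"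
proof (induction n arbitrary: m)
  case 0
  then show ?case by (simp add: count_words_0 shifted_inversions_def)
qed (simp add: count_words_shifted_inversions_Suc)

lemma count_words_shifted_inversions_0:
  "1 \<le> m \<Longrightarrow> count_words n (\<lambda>w. shifted_inversions x m w = 0) = 1"
proof (induction n arbitrary: m)
  case 0
  then show ?case by (simp add: count_words_0 shifted_inversions_def)
qed (simp add: count_words_shifted_inversions_Suc)

lemma count_words_shifted_inversions_1_3:
  "count_words n (\<lambda>w. shifted_inversions x 1 w = 3) = (if n \<ge> 3 then 3 else 0)"
proof (cases "n \<ge> 3")
  case True
  define j where "j = n - 3"
  have "n = Suc (Suc (Suc j))" using True by (simp add: j_def)
  then show ?thesis
    using count_words_shifted_inversions_too_small[of 3 4 j x]
      count_words_shifted_inversions_too_small[of 1 3 j x]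
      count_words_shifted_inversions_too_small[of 2 3 j x]
      count_words_shifted_inversions_too_small[of 1 2 j x]
      count_words_shifted_inversions_0[of 3 j x]
      count_words_shifted_inversions_0[of 2 j x]
      count_words_shifted_inversions_0[of 1 j x]
    by (simp add: count_words_shifted_inversions_Suc flip: One_nat_def)
next
  case False
  then consider "n = 0" | "n = Suc 0" | "n = Suc (Suc 0)" by linarith
  then show ?thesis
    by cases (simp_all add: count_words_shifted_inversions_Suc count_words_0)
qed

lemma count_words_two_runs_eq_3:
  "count_words n (\<lambda>w. subseq_count [x, \<not> x] w = 3) = 3 * (n - 3)"
proof -
  have "count_words n (\<lambda>w. shifted_inversions x 0 w = 3) = 3 * (n - 3)"
  proof (induction n)
    case 0
    then show ?case by (simp add: count_words_0 shifted_inversions_def)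
  next
    case (Suc j)
    then show ?case
      by (simp add: count_words_shifted_inversions_Suc count_words_shifted_inversions_1_3
          flip: One_nat_def; arith)
  qed
  then show ?thesis by (simp add: shifted_inversions_def)
qed

end

lemma subseq_count_replicate: "subseq_count (replicate k x) w = subseq_count [x] w choose k"
proof (induction w arbitrary: k)
  case Nil
  then show ?case by (cases k) simp_all
next
  case (Cons y w)
  show ?case
  proof (cases k)
    case (Suc j)
    then show ?thesis using Cons.IH[of j] Cons.IH[of "Suc j"] by auto
  qed simp
qed

lemma count_words_letter_count: "count_words n (\<lambda>w. subseq_count [x] w = k) = n choose k"
proof (induction n arbitrary: k)
  case 0
  then show ?case by (cases k) (simp_all add: count_words_0)
next
  case (Suc m)
  then show ?case
    using count_words_Suc[of m "\<lambda>w. subseq_count [x] w = k" x] by (cases k) (simp_all add: count_words_False)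
qed

lemma choose_2_eq_3_iff: "(m :: nat) choose 2 = 3 \<longleftrightarrow> m = 3"
proof
  assume eq: "m choose 2 = 3"
  show "m = 3"
  proof (rule ccontr)
    assume "m \<noteq> 3"
    then consider "m \<le> 2" | "m \<ge> 4" by linarith
    then show False
    proof cases
      case 1
      then have "m = 0 \<or> m = 1 \<or> m = 2" by auto
      then show False using eq by (auto simp: choose_two)
    next
      case 2
      then have "m * (m - 1) \<ge> 4 * 3" by (intro mult_le_mono) auto
      then show False using eq by (simp add: choose_two)
    qed
  qed
qed (simp add: choose_two)

section \<open>Binomial form of the count\<close>

lemma Bnp_eq_count_words: "Bnp n p k = count_words n (\<lambda>w. subseq_count p w = k)"
  by (simp add: Bnp_def count_words_def occ_eq_subseq_count)

lemma runs_of_size_eq_count_list: "runs_of_size p i = count_list (run_sizes p) i"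
  unfolding runs_of_size_def count_list_eq_length_filter length_filter_conv_card
  by (rule arg_cong[where f = card]) auto

lemma card_end_positions:
  "card {j. j < length xs \<and> (j = 0 \<or> j = length xs - 1) \<and> xs ! j = a} =
     of_bool (xs \<noteq> [] \<and> hd xs = a) + of_bool (length xs \<ge> 2 \<and> last xs = a)"
proof (cases "length xs \<ge> 2")
  case True
  then have ne: "xs \<noteq> []" by auto
  have "xs ! 0 = hd xs" using ne by (simp add: hd_conv_nth)
  moreover have "xs ! (length xs - 1) = last xs" using ne by (simp add: last_conv_nth)
  ultimately have "{j. j < length xs \<and> (j = 0 \<or> j = length xs - 1) \<and> xs ! j = a} =
      {j. j = 0 \<and> hd xs = a} \<union> {j. j = length xs - 1 \<and> last xs = a}"
    using True by auto
  moreover have "{j. j = 0 \<and> hd xs = a} \<inter> {j. j = length xs - 1 \<and> last xs = a} = {}"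
    using True by auto
  moreover have "card {j. j = i \<and> P} = of_bool P" for i :: nat and P by (cases P) auto
  ultimately show ?thesis using True ne by (simp add: card_Un_disjoint)
next
  case False
  then consider "xs = []" | y where "xs = [y]" by (cases xs) (auto simp: Suc_le_eq)
  then show ?thesis
  proof cases
    case (2 y)
    then have "{j. j < length xs \<and> (j = 0 \<or> j = length xs - 1) \<and> xs ! j = a} =
        (if y = a then {0} else {})" by auto
    then show ?thesis using 2 by simp
  qed simp
qed

lemma runs2_boundary_eq_ends:
  "runs2_boundary p = of_bool (run_sizes p \<noteq> [] \<and> hd (run_sizes p) = 2)
    + of_bool (length (run_sizes p) \<ge> 2 \<and> last (run_sizes p) = 2)"
  unfolding runs2_boundary_def by (rule card_end_positions)

lemma count_list_eq_inner_plus_ends: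
  "count_list xs a = count_list (butlast (tl xs)) a
     + of_bool (xs \<noteq> [] \<and> hd xs = a) + of_bool (length xs \<ge> 2 \<and> last xs = a)"
proof (cases "length xs \<ge> 2")
  case True
  then obtain y ys where "xs = y # ys" "ys \<noteq> []" by (cases xs) (auto simp: Suc_le_eq)
  moreover from this have "count_list ys a = count_list (butlast ys) a + of_bool (last ys = a)"
    by (cases ys rule: rev_cases) auto
  ultimately show ?thesis by (auto simp: Suc_le_eq)
next
  case False
  then have "xs = [] \<or> (\<exists>y. xs = [y])" by (cases xs) (auto simp: Suc_le_eq)
  then show ?thesis by auto
qed

lemma three_num_eq_binoms:
  fixes p :: "bool list" and n :: nat
  defines "rs \<equiv> run_sizes p" and "l \<equiv> int (length p)" and "r \<equiv> int (length (run_sizes p))"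
  shows "three_num p (int n - l) =
      count_list rs 1 * binom (int n - r - 1) (l - r + 1)
    + count_list (butlast (tl rs)) 2 * binom (int n - r - 1) (l - r)
    + (of_bool (rs \<noteq> [] \<and> hd rs = 2) + of_bool (length rs \<ge> 2 \<and> last rs = 2))
        * binom (int n - r) (l - r + 1)"
proof -
  define g where "g = length p - length rs + 2"
  have g: "int g = l - r + 2"
    using length_run_sizes_le[of p] by (simp add: g_def l_def r_def rs_def)
  have "weak_comps (int n - l - 2) g = binom (int n - l - 2 + int g - 1) (int g - 1)"
    by (rule weak_comps_eq_binom) (simp add: g_def)
  also have "\<dots> = binom (int n - r - 1) (l - r + 1)" using g by (intro arg_cong2[where f = binom]) linarith+
  finally have 1: "weak_comps (int n - l - 2) g = binom (int n - r - 1) (l - r + 1)" .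
  have "weak_comps (int n - l - 1) (g - 1) = binom (int n - l - 1 + int (g - 1) - 1) (int (g - 1) - 1)"
    by (rule weak_comps_eq_binom) (simp add: g_def)
  also have "\<dots> = binom (int n - r - 1) (l - r)" using g by (intro arg_cong2[where f = binom]) (simp_all add: g_def of_nat_diff)
  finally have 2: "weak_comps (int n - l - 1) (g - 1) = binom (int n - r - 1) (l - r)" .
  have "weak_comps (int n - l - 1) g = binom (int n - l - 1 + int g - 1) (int g - 1)"
    by (rule weak_comps_eq_binom) (simp add: g_def)
  also have "\<dots> = binom (int n - r) (l - r + 1)" using g by (intro arg_cong2[where f = binom]) linarith+
  finally have 3: "weak_comps (int n - l - 1) g = binom (int n - r) (l - r + 1)" .
  show ?thesis unfolding three_num_def Let_def rs_def[symmetric] g_def[symmetric] 1 2 3 ..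
qed

lemma Bnp_3_long_pattern:
  fixes p :: "bool list" and n :: nat
  defines "l \<equiv> int (length p)" and "r \<equiv> int (length (runs p))"
  assumes "l \<ge> 3"
  shows "Bnp n p 3 = runs_of_size p 1 * binom (int n - r - 1) (l - r + 1)
                   + (runs_of_size p 2 - runs2_boundary p) * binom (int n - r - 1) (l - r)
                   + runs2_boundary p * binom (int n - r) (l - r + 1)"
proof -
  obtain x q where p: "p = x # q" and q: "length q \<ge> 2"
    using assms(3) by (cases p) (auto simp: l_def)
  have r: "r = int (length (run_sizes p))" by (simp add: r_def run_sizes_def)
  have "runs_of_size p 2 - runs2_boundary p = count_list (butlast (tl (run_sizes p))) 2"
    using count_list_eq_inner_plus_ends[of "run_sizes p" 2]
    by (simp add: runs_of_size_eq_count_list runs2_boundary_eq_ends)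
  moreover have "Bnp n p 3 = three_num p (int n - l)"
    using count_words_subseq_count_eq_3[OF q] by (simp add: Bnp_eq_count_words p l_def)
  ultimately show ?thesis
    by (simp add: three_num_eq_binoms r l_def runs_of_size_eq_count_list runs2_boundary_eq_ends)
qed

lemma Bnp_3_replicate: "k \<in> {1, 2} \<Longrightarrow> Bnp n (replicate k x) 3 = n choose 3"
  using count_words_letter_count[of n x 3]
  by (auto simp: Bnp_eq_count_words subseq_count_replicate choose_2_eq_3_iff)

lemma Bnp_3_two_runs: "Bnp n [x, \<not> x] 3 = 3 * (n - 3)"
  by (simp add: Bnp_eq_count_words count_words_two_runs_eq_3)

lemma short_pattern_cases:
  assumes "length p < 3"
  obtains "runs p = []" | k x where "k \<in> {1, 2}" "p = replicate k x" "length (runs p) = 1"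
    | x where "p = [x, \<not> x]" "length (runs p) = 2"
proof (cases p rule: remdups_adj.cases)
  case 1
  then show ?thesis using that(1) by simp
next
  case (2 x)
  then show ?thesis using that(2)[of 1 x] by simp
next
  case (3 x y q)
  then have "q = []" using assms by simp
  then show ?thesis
    using 3 that(2)[of 2 x] that(3)[of x] by (cases "y = x") (auto simp: numeral_2_eq_2)
qed

theorem mainTheorem5:
  fixes p :: "bool list" and n :: nat
  assumes "n \<ge> 3"
  defines "l \<equiv> int (length p)" and "r \<equiv> int (length (runs p))"
  shows "(l \<ge> 3 \<longrightarrow>
           Bnp n p 3 = runs_of_size p 1 * binom (int n - r - 1) (l - r + 1)
                     + (runs_of_size p 2 - runs2_boundary p) * binom (int n - r - 1) (l - r)
                     + runs2_boundary p * binom (int n - r) (l - r + 1))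
       \<and> (l < 3 \<longrightarrow>
           (r = 1 \<longrightarrow> Bnp n p 3 = n choose 3)
         \<and> (r = 2 \<longrightarrow> Bnp n p 3 = 3 * (n - 3)))"
proof (intro conjI impI)
  show "l \<ge> 3 \<Longrightarrow> Bnp n p 3 = runs_of_size p 1 * binom (int n - r - 1) (l - r + 1)
                     + (runs_of_size p 2 - runs2_boundary p) * binom (int n - r - 1) (l - r)
                     + runs2_boundary p * binom (int n - r) (l - r + 1)"
    unfolding l_def r_def by (rule Bnp_3_long_pattern)
next
  assume "l < 3"
  then have "length p < 3" by (simp add: l_def)
  then consider "runs p = []" | k x where "k \<in> {1, 2}" "p = replicate k x" "length (runs p) = 1"
    | x where "p = [x, \<not> x]" "length (runs p) = 2"
    by (rule short_pattern_cases)
  then show "r = 1 \<Longrightarrow> Bnp n p 3 = n choose 3" and "r = 2 \<Longrightarrow> Bnp n p 3 = 3 * (n - 3)"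
    by (cases; simp add: r_def Bnp_3_replicate Bnp_3_two_runs)+
qed

end
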